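(* For even $m\ge 18$, let $G^{\mathrm{same}}_m$ be the graph with vertex set $\{u^*\}\cup A\cup\{z,x,y\}\cup L$, where $A=\{a_1,a_2,a_3,a_4\}$ induces a $K_4$, $|L|=m-14$, $u^*$ is adjacent to every vertex of $A\cup\{z\}\cup L$, $z$ is adjacent to $x$ and $y$, $x$ is adjacent to $y$, and there are no other edges (so $G^{\mathrm{same}}_m$ has $m$ edges). Its spectral radius equals the largest root of \[ f_{\mathrm{same}}(x)=x^5-4x^4+(10-m)x^3+(4m-42)x^2+(19-m)x+84-6m, \] and $\rho(G^{\mathrm{same}}_m)<\rho'(m)$.
   Context: $\rho(G)$ denotes the adjacency spectral radius. For even $m$, $\rho'(m)$ is the largest real root of $p_m(x)=x^4-mx^2-(m-2)x+\frac{m}{2}-1$. *)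

theory Defs
  imports "Jordan_Normal_Form.Spectral_Radius" "HOL-Computational_Algebra.Polynomial"
begin

definition adj_matrix :: "nat \<Rightarrow> (nat \<Rightarrow> nat \<Rightarrow> bool) \<Rightarrow> complex mat" where
  "adj_matrix n E = mat n n (\<lambda>(i,j). if E i j then 1 else 0)"

definition graph_spectral_radius :: "nat \<Rightarrow> (nat \<Rightarrow> nat \<Rightarrow> bool) \<Rightarrow> real" where
  "graph_spectral_radius n E = spectral_radius (adj_matrix n E)"

definition largest_real_root :: "real poly \<Rightarrow> real" where
  "largest_real_root p = Max {x. poly p x = 0}"

text \<open>G^same_m on vertices {0..<m-6}: 0 = u*, 1..4 = A, 5 = z, 6 = x, 7 = y,
  8..m-7 = L (m-14 vertices).\<close>
definition gsame_edge :: "nat \<Rightarrow> nat \<Rightarrow> nat \<Rightarrow> bool" where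
  "gsame_edge m i j \<longleftrightarrow>
     (i = 0 \<and> ((1 \<le> j \<and> j \<le> 5) \<or> (8 \<le> j \<and> j < m - 6)))
   \<or> (1 \<le> i \<and> i < j \<and> j \<le> 4)
   \<or> (i = 5 \<and> (j = 6 \<or> j = 7))
   \<or> (i = 6 \<and> j = 7)"

definition gsame_adj :: "nat \<Rightarrow> nat \<Rightarrow> nat \<Rightarrow> bool" where
  "gsame_adj m i j \<longleftrightarrow> i < m - 6 \<and> j < m - 6 \<and> (gsame_edge m i j \<or> gsame_edge m j i)"

definition f_same :: "nat \<Rightarrow> real poly" where
  "f_same m = [: 84 - 6 * real m, 19 - real m, 4 * real m - 42, 10 - real m, -4, 1 :]"

definition p_poly :: "nat \<Rightarrow> real poly" where
  "p_poly m = [: real m / 2 - 1, -(real m - 2), - real m, 0, 1 :]"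

definition rho' :: "nat \<Rightarrow> real" where
  "rho' m = largest_real_root (p_poly m)"

end

theory Submission
  imports Defs
begin

text \<open>Weight the vertices of the graph class by class (u*, the clique A, z, {x, y}, the
  leaves L) with l(l-3)(l-2)(l+1), l(l-2)(l+1), l(l-1)(l-3), l(l-3) and (l-3)(l-2)(l+1).
  The eigen-equation for l then holds at every vertex except u*, where it reads
  f_same(l) = 0. For the largest root l > 21/5 these weights are positive, and a positive
  eigenvector of a nonnegative matrix belongs to the spectral radius: compare any other
  eigenvector with it at a coordinate where their ratio is maximal. Finally
  (2x^2 + 2x - 1) f_same(x) = 2(x-3)(x-2)(x+1) p_m(x) + h(x), where the multipliers make the
  terms in m cancel and h(x) > 0 for x > 21/5; hence p_m(l) < 0, and p_m has a root beyond l.\<close>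

lemma eigenvalue_norm_le_of_positive_eigenvector:
  fixes A :: "complex mat" and B :: "nat \<Rightarrow> nat \<Rightarrow> real" and w :: "nat \<Rightarrow> real"
  assumes A: "A \<in> carrier_mat n n"
    and entries: "\<And>i j. i < n \<Longrightarrow> j < n \<Longrightarrow> A $$ (i,j) = of_real (B i j)"
    and nonneg: "\<And>i j. i < n \<Longrightarrow> j < n \<Longrightarrow> B i j \<ge> 0"
    and pos: "\<And>i. i < n \<Longrightarrow> w i > 0"
    and eigen: "\<And>i. i < n \<Longrightarrow> (\<Sum>j<n. B i j * w j) = lam * w i"
    and "eigenvalue A mu"
  shows "norm mu \<le> lam"
proof -
  obtain u where u: "u \<in> carrier_vec n" "u \<noteq> 0\<^sub>v n" "A *\<^sub>v u = mu \<cdot>\<^sub>v u"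
    using \<open>eigenvalue A mu\<close> A unfolding eigenvalue_def eigenvector_def by auto
  then obtain j0 where j0: "j0 < n" "u $ j0 \<noteq> 0"
    by (metis carrier_vecD eq_vecI index_zero_vec(1,2))
  define ratio where "ratio j = norm (u $ j) / w j" for j
  define r where "r = Max (ratio ` {..<n})"
  have "r \<in> ratio ` {..<n}"
    unfolding r_def using j0(1) by (intro Max_in) auto
  then obtain k where k: "k < n" "r = ratio k" by auto
  have bound: "norm (u $ j) \<le> r * w j" if "j < n" for j
    using that pos[OF that] Max_ge[of "ratio ` {..<n}" "ratio j"]
    unfolding r_def ratio_def by (simp add: divide_le_eq mult.commute)
  have uk: "norm (u $ k) = r * w k"
    using k pos[OF k(1)] unfolding ratio_def by simp
  have "0 < norm (u $ j0)" using j0 by simp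
  also have "\<dots> \<le> r * w j0" using bound j0 by simp
  finally have "0 < r" using pos[OF j0(1)] by (simp add: zero_less_mult_iff)
  hence uk_pos: "0 < norm (u $ k)" using uk pos[OF k(1)] by simp
  have "mu * u $ k = (A *\<^sub>v u) $ k" using u k by simp
  also have "\<dots> = (\<Sum>j<n. of_real (B k j) * u $ j)"
    using A u(1) k entries by (simp add: scalar_prod_def atLeast0LessThan)
  finally have "norm mu * norm (u $ k) = norm (\<Sum>j<n. of_real (B k j) * u $ j)"
    by (metis norm_mult)
  also have "\<dots> \<le> (\<Sum>j<n. B k j * norm (u $ j))"
    using norm_sum[of "\<lambda>j. of_real (B k j) * u $ j" "{..<n}"] nonneg k(1)
    by (simp add: norm_mult)
  also have "\<dots> \<le> (\<Sum>j<n. B k j * (r * w j))"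
    by (intro sum_mono mult_left_mono) (use bound nonneg k(1) in auto)
  also have "\<dots> = r * (\<Sum>j<n. B k j * w j)"
    by (simp add: sum_distrib_left algebra_simps)
  also have "\<dots> = lam * norm (u $ k)"
    using eigen[OF k(1)] uk by simp
  finally show ?thesis using uk_pos by simp
qed

lemma spectral_radius_eq_of_positive_eigenvector:
  fixes A :: "complex mat" and B :: "nat \<Rightarrow> nat \<Rightarrow> real" and w :: "nat \<Rightarrow> real"
  assumes A: "A \<in> carrier_mat n n" and "0 < n"
    and entries: "\<And>i j. i < n \<Longrightarrow> j < n \<Longrightarrow> A $$ (i,j) = of_real (B i j)"
    and nonneg: "\<And>i j. i < n \<Longrightarrow> j < n \<Longrightarrow> B i j \<ge> 0"
    and pos: "\<And>i. i < n \<Longrightarrow> w i > 0"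
    and eigen: "\<And>i. i < n \<Longrightarrow> (\<Sum>j<n. B i j * w j) = lam * w i"
  shows "spectral_radius A = lam"
proof -
  define v where "v = vec n (\<lambda>j. complex_of_real (w j))"
  have "A *\<^sub>v v = of_real lam \<cdot>\<^sub>v v"
  proof (rule eq_vecI)
    fix i assume "i < dim_vec (of_real lam \<cdot>\<^sub>v v)"
    hence i: "i < n" unfolding v_def by simp
    have "(A *\<^sub>v v) $ i = of_real (\<Sum>j<n. B i j * w j)"
      using A i entries unfolding v_def by (simp add: scalar_prod_def atLeast0LessThan)
    then show "(A *\<^sub>v v) $ i = (of_real lam \<cdot>\<^sub>v v) $ i"
      using eigen[OF i] i unfolding v_def by simp
  qed (use A v_def in simp)
  moreover have "v \<noteq> 0\<^sub>v n"
    using \<open>0 < n\<close> pos[of 0] unfolding v_def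
    by (metis index_vec index_zero_vec(1) of_real_eq_0_iff less_irrefl)
  ultimately have "eigenvalue A (of_real lam)"
    unfolding eigenvalue_def eigenvector_def using A by (intro exI[of _ v]) (simp add: v_def)
  moreover have bound: "norm mu \<le> lam" if "eigenvalue A mu" for mu
    by (rule eigenvalue_norm_le_of_positive_eigenvector[OF A entries nonneg pos eigen that])
  ultimately have "norm (complex_of_real lam) \<in> norm ` spectrum A" "lam \<ge> 0"
    unfolding spectrum_def by fastforce+
  then show ?thesis
    unfolding spectral_radius_def using card_finite_spectrum(1)[OF A] bound
    by (intro Max_eqI) (auto simp: spectrum_def)
qed

lemma graph_spectral_radius_eq_of_positive_eigenvector:
  fixes E :: "nat \<Rightarrow> nat \<Rightarrow> bool" and w :: "nat \<Rightarrow> real"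
  assumes "0 < n"
    and pos: "\<And>i. i < n \<Longrightarrow> w i > 0"
    and eigen: "\<And>i. i < n \<Longrightarrow> (\<Sum>j | j < n \<and> E i j. w j) = lam * w i"
  shows "graph_spectral_radius n E = lam"
  unfolding graph_spectral_radius_def
proof (rule spectral_radius_eq_of_positive_eigenvector[OF _ \<open>0 < n\<close> _ _ pos])
  show "(\<Sum>j<n. (if E i j then 1 else 0) * w j) = lam * w i" if "i < n" for i
  proof -
    have "(\<Sum>j<n. (if E i j then 1 else 0) * w j) = (\<Sum>j<n. if E i j then w j else 0)"
      by (rule sum.cong) auto
    then show ?thesis using eigen[OF that] sum.inter_filter[of "{..<n}" w "E i"] by simp
  qed
qed (auto simp: adj_matrix_def)

lemma largest_real_root_gt:
  fixes p :: "real poly"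
  assumes "lead_coeff p > 0" and "poly p a < 0"
  shows "a < largest_real_root p" and "poly p (largest_real_root p) = 0"
proof -
  obtain N where N: "\<And>x. N \<le> x \<Longrightarrow> lead_coeff p \<le> poly p x"
    using poly_pinfty_gt_lc[OF assms(1)] by auto
  define b where "b = max N (a + 1)"
  have "a < b" and "0 < poly p b"
    using N[of b] assms(1) unfolding b_def by auto
  then obtain x where x: "a < x" "poly p x = 0"
    using poly_IVT_pos[OF _ assms(2)] by blast
  define S where "S = {x. poly p x = 0}"
  have "p \<noteq> 0" using assms(1) by auto
  then have "finite S" unfolding S_def by (rule poly_roots_finite)
  moreover have "x \<in> S" using x unfolding S_def by simp
  ultimately have "x \<le> Max S" and "Max S \<in> S" by (auto intro: Max_ge Max_in)
  then show "a < largest_real_root p" and "poly p (largest_real_root p) = 0"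
    using x unfolding largest_real_root_def S_def[symmetric] by (auto simp: S_def)
qed

lemma poly_f_same:
  "poly (f_same m) x = x^5 - 4 * x^4 + (10 - real m) * x^3 + (4 * real m - 42) * x^2
     + (19 - real m) * x + 84 - 6 * real m"
  unfolding f_same_def by (simp add: algebra_simps power_numeral_reduce)

lemma poly_p_poly: "poly (p_poly m) x = x^4 - real m * x^2 - (real m - 2) * x + real m / 2 - 1"
  unfolding p_poly_def by (simp add: algebra_simps power_numeral_reduce)

definition gsame_weight :: "real \<Rightarrow> nat \<Rightarrow> real" where
  "gsame_weight l i =
     (if i = 0 then l * (l - 3) * (l - 2) * (l + 1)
      else if i \<le> 4 then l * (l - 2) * (l + 1)
      else if i = 5 then l * (l - 1) * (l - 3)
      else if i \<le> 7 then l * (l - 3)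
      else (l - 3) * (l - 2) * (l + 1))"

lemma gsame_weight_pos: "3 < l \<Longrightarrow> 0 < gsame_weight l i"
  unfolding gsame_weight_def by simp

lemma gsame_neighbours:
  assumes "18 \<le> m" and "i < m - 6"
  shows "{j. j < m - 6 \<and> gsame_adj m i j} =
    (if i = 0 then {1..5} \<union> {8..<m - 6}
     else if i \<le> 4 then {0..4} - {i}
     else if i = 5 then {0, 6, 7}
     else if i = 6 then {5, 7}
     else if i = 7 then {5, 6}
     else {0})"
  using assms unfolding gsame_adj_def gsame_edge_def by auto

lemma gsame_weight_eigen:
  assumes "18 \<le> m" and i: "i < m - 6" and root: "poly (f_same m) l = 0"
  shows "(\<Sum>j | j < m - 6 \<and> gsame_adj m i j. gsame_weight l j) = l * gsame_weight l i"
proof -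
  let ?w = "gsame_weight l"
  consider "i = 0" | "1 \<le> i" "i \<le> 4" | "i = 5" | "i = 6" | "i = 7" | "8 \<le> i" by linarith
  then show ?thesis
  proof cases
    case 1
    have "(\<Sum>j \<in> {1..5} \<union> {8..<m - 6}. ?w j) = (\<Sum>j \<in> {1..5}. ?w j) + (\<Sum>j \<in> {8..<m - 6}. ?w j)"
      by (rule sum.union_disjoint) auto
    also have "\<dots> = 4 * ?w 1 + ?w 5 + (real m - 14) * ?w 8"
      using \<open>18 \<le> m\<close> by (simp add: gsame_weight_def numeral_eq_Suc)
    also have "\<dots> = l * ?w 0"
      using root unfolding poly_f_same gsame_weight_def by (simp add: algebra_simps power_numeral_reduce)
    finally show ?thesis using 1 gsame_neighbours[OF \<open>18 \<le> m\<close> i] by simp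
  next
    case 2
    have "(\<Sum>j \<in> {0..4} - {i}. ?w j) = (\<Sum>j \<in> {0..4}. ?w j) - ?w i"
      using 2 by (simp add: sum_diff1)
    also have "\<dots> = l * ?w i"
      using 2 by (simp add: gsame_weight_def numeral_eq_Suc algebra_simps)
    finally show ?thesis using 2 gsame_neighbours[OF \<open>18 \<le> m\<close> i] by simp
  qed (use gsame_neighbours[OF \<open>18 \<le> m\<close> i] in \<open>auto simp: gsame_weight_def algebra_simps\<close>)
qed

lemma poly_f_same_neg: "18 \<le> m \<Longrightarrow> poly (f_same m) (21/5) < 0"
  unfolding poly_f_same by (simp add: power_numeral_reduce field_simps)

lemma poly_p_poly_neg_at_root_of_f_same:
  assumes root: "poly (f_same m) x = 0" and "21/5 < x"
  shows "poly (p_poly m) x < 0"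
proof -
  define h where "h = 2*x^6 + 9*x^5 - 76*x^4 - 38*x^3 + 236*x^2 + 127*x - 72"
  have identity: "(2*x^2 + 2*x - 1) * poly (f_same m) x
      = 2 * ((x - 3) * (x - 2) * (x + 1) * poly (p_poly m) x) + h"
    unfolding poly_f_same poly_p_poly h_def by (simp add: algebra_simps power_numeral_reduce)
  have "0 < h"
  proof -
    define z where "z = 5 * x - 21"
    have "0 < z" using \<open>21/5 < x\<close> unfolding z_def by simp
    have "15625 * h = 14070012 + 22691462*z + 4822730*z^2 + 404540*z^3 + 16055*z^4 + 297*z^5 + 2*z^6"
      unfolding h_def z_def by (simp add: algebra_simps power_numeral_reduce)
    also have "\<dots> > 0"
      using \<open>0 < z\<close> by (intro add_pos_nonneg add_nonneg_nonneg mult_nonneg_nonneg) auto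
    finally show ?thesis by simp
  qed
  with identity root have "(x - 3) * (x - 2) * (x + 1) * poly (p_poly m) x < 0" by simp
  moreover have "0 < (x - 3) * (x - 2) * (x + 1)" using \<open>21/5 < x\<close> by simp
  ultimately show ?thesis by (metis mult_less_cancel_left_pos mult_zero_right)
qed

theorem proposition6p2:
  fixes m :: nat
  assumes "even m" and "m \<ge> 18"
  shows "graph_spectral_radius (m - 6) (gsame_adj m) = largest_real_root (f_same m)
     \<and> graph_spectral_radius (m - 6) (gsame_adj m) < rho' m"
proof -
  define l where "l = largest_real_root (f_same m)"
  have lead: "lead_coeff (f_same m) = 1" "lead_coeff (p_poly m) = 1"
    unfolding f_same_def p_poly_def by simp_all
  have "21/5 < l" and root: "poly (f_same m) l = 0"
    using largest_real_root_gt[OF _ poly_f_same_neg[OF \<open>m \<ge> 18\<close>]] lead unfolding l_def by simp_all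
  have "graph_spectral_radius (m - 6) (gsame_adj m) = l"
    using \<open>m \<ge> 18\<close> \<open>21/5 < l\<close> gsame_weight_eigen[OF \<open>m \<ge> 18\<close> _ root]
    by (intro graph_spectral_radius_eq_of_positive_eigenvector[where w = "gsame_weight l"])
      (simp_all add: gsame_weight_pos)
  moreover have "l < rho' m"
    using largest_real_root_gt(1)[OF _ poly_p_poly_neg_at_root_of_f_same[OF root \<open>21/5 < l\<close>]] lead
    unfolding rho'_def by simp
  ultimately show ?thesis unfolding l_def by simp
qed

end
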